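(* For every $v\in\mathbb{C}^n$, the element $g=(\mathrm{J}(1,n),v)\in\mathrm{Aff}(n,\mathbb{C})$ is strongly $c$-reversible.
   Context: $\mathrm{J}(1,n)$ denotes the $n\times n$ Jordan block with $1$ on the diagonal and on the superdiagonal and $0$ elsewhere. $\mathrm{Aff}(n,\mathbb{C})$ is the group of affine maps $z\mapsto Az+v$, written $(A,v)$, with product $(A,v)(B,w)=(AB,Aw+v)$ and identity $e=(I_n,0)$. For $g=(A,v)$ set $\overline{g}=(\overline{A},\overline{v})$. An element $h$ is a coninvolution if $h\overline{h}=e$; $g$ is strongly $c$-reversible if there is a coninvolution $h$ with $hgh^{-1}=\overline{g}^{-1}$. *)

theory Defs
  imports "Jordan_Normal_Form.Jordan_Normal_Form"
begin

text \<open>Elements of Aff(n,C) are pairs (A,v) with A an invertible n x n complex matrix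
  and v a complex vector of dimension n; they act as z maps to A z + v.\<close>

type_synonym aff = "complex mat \<times> complex vec"

definition Aff :: "nat \<Rightarrow> aff set" where
  "Aff n = {(A, v). A \<in> carrier_mat n n \<and> invertible_mat A \<and> v \<in> carrier_vec n}"

definition aff_mult :: "aff \<Rightarrow> aff \<Rightarrow> aff" where
  "aff_mult g h = (case g of (A, v) \<Rightarrow> case h of (B, w) \<Rightarrow> (A * B, A *\<^sub>v w + v))"

definition aff_one :: "nat \<Rightarrow> aff" where
  "aff_one n = (1\<^sub>m n, 0\<^sub>v n)"

definition aff_inv :: "nat \<Rightarrow> aff \<Rightarrow> aff" where
  "aff_inv n g = (THE k. k \<in> Aff n \<and> aff_mult g k = aff_one n \<and> aff_mult k g = aff_one n)"

definition aff_cnj :: "aff \<Rightarrow> aff" where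
  "aff_cnj g = (case g of (A, v) \<Rightarrow> (map_mat cnj A, map_vec cnj v))"

definition coninvolution :: "nat \<Rightarrow> aff \<Rightarrow> bool" where
  "coninvolution n h \<longleftrightarrow> h \<in> Aff n \<and> aff_mult h (aff_cnj h) = aff_one n"

definition strongly_c_reversible :: "nat \<Rightarrow> aff \<Rightarrow> bool" where
  "strongly_c_reversible n g \<longleftrightarrow>
     (\<exists>h. coninvolution n h \<and>
          aff_mult (aff_mult h g) (aff_inv n h) = aff_inv n (aff_cnj g))"

end

theory Submission
  imports Defs
begin

text \<open>
  Write \<open>J\<close> for \<open>J(1,n)\<close>. Since \<open>J - I\<close> is the shift, conjugating \<open>g = (J,v)\<close> by a
  translation removes all but the last coordinate of \<open>v\<close>, and conjugating by a scalar matrix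
  (which commutes with \<open>J\<close>) makes that coordinate \<open>0\<close> or \<open>1\<close>. Hence \<open>g\<close> is conjugate
  in \<open>Aff(n,\<complex>)\<close> to a real element \<open>g\<^sub>0 = (J, r e\<^sub>n)\<close>, and being strongly \<open>c\<close>-reversible is
  a conjugacy invariant because complex conjugation is an involutive automorphism. A real
  \<open>g\<^sub>0\<close> is reversed by any real involution \<open>h\<close> with \<open>(h g\<^sub>0)\<^sup>2 = e\<close>. We take \<open>h = (P, r u)\<close>
  with a signed binomial matrix \<open>P\<close> satisfying \<open>P\<^sup>2 = I\<close> and \<open>J P J = P\<close>, and a binomial
  vector \<open>u\<close> with \<open>P u = -u\<close> that solves the remaining linear equation.
\<close>

lemma invertible_matI:
  assumes "A \<in> carrier_mat n n" "B \<in> carrier_mat n n" "A * B = 1\<^sub>m n" "B * A = 1\<^sub>m n"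
  shows "invertible_mat A"
  using assms unfolding invertible_mat_def inverts_mat_def square_mat.simps by auto

lemma invertible_matE:
  assumes "invertible_mat A" "A \<in> carrier_mat n n"
  obtains B where "B \<in> carrier_mat n n" "A * B = 1\<^sub>m n" "B * A = 1\<^sub>m n"
proof -
  obtain B where AB: "A * B = 1\<^sub>m n" and BA: "B * A = 1\<^sub>m (dim_row B)"
    using assms unfolding invertible_mat_def inverts_mat_def by auto
  have "dim_col B = n" "dim_row B = n"
    using arg_cong[OF AB, of dim_col] arg_cong[OF BA, of dim_col] assms(2) by auto
  with AB BA that show ?thesis by auto
qed

interpretation cnj: ring_hom cnj
  by unfold_locales auto

lemma aff_mult_Pair [simp]: "aff_mult (A, v) (B, w) = (A * B, A *\<^sub>v w + v)"
  by (simp add: aff_mult_def)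

lemma aff_cnj_Pair [simp]: "aff_cnj (A, v) = (map_mat cnj A, map_vec cnj v)"
  by (simp add: aff_cnj_def)

lemma aff_cnj_aff_cnj [simp]: "aff_cnj (aff_cnj g) = g"
  by (cases g) (auto intro!: eq_matI eq_vecI)

lemma mem_Aff_iff [simp]:
  "(A, v) \<in> Aff n \<longleftrightarrow> A \<in> carrier_mat n n \<and> invertible_mat A \<and> v \<in> carrier_vec n"
  by (simp add: Aff_def)

definition aff_group :: "nat \<Rightarrow> aff monoid" where
  "aff_group n = \<lparr>carrier = Aff n, mult = aff_mult, one = aff_one n\<rparr>"

lemma aff_group_simps [simp]:
  "carrier (aff_group n) = Aff n"
  "x \<otimes>\<^bsub>aff_group n\<^esub> y = aff_mult x y"
  "\<one>\<^bsub>aff_group n\<^esub> = aff_one n"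
  by (simp_all add: aff_group_def)

lemma invertible_mat_mult:
  assumes A: "A \<in> carrier_mat n n" "invertible_mat A" and B: "B \<in> carrier_mat n n" "invertible_mat B"
  shows "invertible_mat (A * B)"
proof -
  obtain A' where A': "A' \<in> carrier_mat n n" "A * A' = 1\<^sub>m n" "A' * A = 1\<^sub>m n"
    using invertible_matE[OF A(2,1)] .
  obtain B' where B': "B' \<in> carrier_mat n n" "B * B' = 1\<^sub>m n" "B' * B = 1\<^sub>m n"
    using invertible_matE[OF B(2,1)] .
  have "A * B * (B' * A') = A * ((B * B') * A')" "B' * A' * (A * B) = B' * ((A' * A) * B)"
    using A(1) B(1) A'(1) B'(1) by (simp_all add: assoc_mult_mat[of _ n n _ n _ n])
  then show ?thesis
    using A B A' B' by (intro invertible_matI[of _ n "B' * A'"]) auto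
qed

lemma aff_mult_closed:
  assumes "g \<in> Aff n" "h \<in> Aff n"
  shows "aff_mult g h \<in> Aff n"
  using assms by (cases g, cases h) (auto simp: invertible_mat_mult)

lemma group_aff_group: "group (aff_group n)"
proof (rule groupI)
  fix g h k assume "g \<in> carrier (aff_group n)" "h \<in> carrier (aff_group n)" "k \<in> carrier (aff_group n)"
  then show "g \<otimes>\<^bsub>aff_group n\<^esub> h \<otimes>\<^bsub>aff_group n\<^esub> k = g \<otimes>\<^bsub>aff_group n\<^esub> (h \<otimes>\<^bsub>aff_group n\<^esub> k)"
    by (cases g, cases h, cases k)
      (auto simp: assoc_mult_mat[of _ n n _ n _ n] assoc_mult_mat_vec[of _ n n _ n]
        mult_add_distrib_mat_vec[of _ n n] assoc_add_vec[of _ n])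
next
  fix g assume g: "g \<in> carrier (aff_group n)"
  obtain A v where gAv: "g = (A, v)" by (cases g)
  have A: "A \<in> carrier_mat n n" "invertible_mat A" and v: "v \<in> carrier_vec n"
    using g gAv by auto
  obtain B where B: "B \<in> carrier_mat n n" "A * B = 1\<^sub>m n" "B * A = 1\<^sub>m n"
    using invertible_matE[OF A(2,1)] .
  have "(B, - (B *\<^sub>v v)) \<in> Aff n"
    using A B v invertible_matI[of B n A] by auto
  moreover have "aff_mult (B, - (B *\<^sub>v v)) g = aff_one n"
    using B v by (auto simp: gAv aff_one_def intro!: eq_vecI)
  ultimately show "\<exists>h\<in>carrier (aff_group n). h \<otimes>\<^bsub>aff_group n\<^esub> g = \<one>\<^bsub>aff_group n\<^esub>"
    by auto
  show "\<one>\<^bsub>aff_group n\<^esub> \<otimes>\<^bsub>aff_group n\<^esub> g = g"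
    using A v by (simp add: gAv aff_one_def)
qed (auto simp: aff_mult_closed aff_one_def invertible_matI[of "1\<^sub>m n" n "1\<^sub>m n"])

lemma aff_inv_eq_inv:
  assumes "g \<in> Aff n"
  shows "aff_inv n g = inv\<^bsub>aff_group n\<^esub> g"
proof -
  interpret group "aff_group n" by (rule group_aff_group)
  show ?thesis
    unfolding aff_inv_def
  proof (rule the_equality)
    show "inv\<^bsub>aff_group n\<^esub> g \<in> Aff n \<and> aff_mult g (inv\<^bsub>aff_group n\<^esub> g) = aff_one n
        \<and> aff_mult (inv\<^bsub>aff_group n\<^esub> g) g = aff_one n"
      using assms r_inv[of g] l_inv[of g] inv_closed[of g] by simp
  next
    fix h assume "h \<in> Aff n \<and> aff_mult g h = aff_one n \<and> aff_mult h g = aff_one n"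
    then show "h = inv\<^bsub>aff_group n\<^esub> g"
      using assms inv_unique'[of g h] by simp
  qed
qed

lemma map_vec_cnj_add:
  assumes "dim_vec v = dim_vec w"
  shows "map_vec cnj (v + w) = map_vec cnj v + map_vec cnj w"
  using assms by (intro eq_vecI) auto

lemma aff_cnj_hom: "aff_cnj \<in> hom (aff_group n) (aff_group n)"
proof (rule homI)
  fix g assume "g \<in> carrier (aff_group n)"
  then obtain A v where g: "g = (A, v)" "A \<in> carrier_mat n n" "invertible_mat A" "v \<in> carrier_vec n"
    by (cases g) auto
  then obtain B where B: "B \<in> carrier_mat n n" "A * B = 1\<^sub>m n" "B * A = 1\<^sub>m n"
    using invertible_matE by blast
  have "map_mat cnj A * map_mat cnj B = 1\<^sub>m n" "map_mat cnj B * map_mat cnj A = 1\<^sub>m n"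
    using g B
    by (simp_all add: cnj.mat_hom_one flip: cnj.mat_hom_mult[of A n n B n] cnj.mat_hom_mult[of B n n A n])
  then have "invertible_mat (map_mat cnj A)"
    using g B by (intro invertible_matI[of _ n "map_mat cnj B"]) auto
  then show "aff_cnj g \<in> carrier (aff_group n)"
    using g by simp
next
  fix g h assume "g \<in> carrier (aff_group n)" "h \<in> carrier (aff_group n)"
  then obtain A v B w where "g = (A, v)" "h = (B, w)" "A \<in> carrier_mat n n" "B \<in> carrier_mat n n"
      "v \<in> carrier_vec n" "w \<in> carrier_vec n"
    by (cases g, cases h) auto
  then show "aff_cnj (g \<otimes>\<^bsub>aff_group n\<^esub> h) = aff_cnj g \<otimes>\<^bsub>aff_group n\<^esub> aff_cnj h"
    by (simp add: cnj.mat_hom_mult[of A n n B n] cnj.mult_mat_vec_hom[of A n n w] map_vec_cnj_add)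
qed

definition c_reverses :: "('a, 'b) monoid_scheme \<Rightarrow> ('a \<Rightarrow> 'a) \<Rightarrow> 'a \<Rightarrow> 'a \<Rightarrow> bool" where
  "c_reverses G \<sigma> h g \<longleftrightarrow>
     h \<in> carrier G \<and> h \<otimes>\<^bsub>G\<^esub> \<sigma> h = \<one>\<^bsub>G\<^esub> \<and> h \<otimes>\<^bsub>G\<^esub> g \<otimes>\<^bsub>G\<^esub> inv\<^bsub>G\<^esub> h = inv\<^bsub>G\<^esub> (\<sigma> g)"

lemma (in group) c_reverses_conj:
  assumes hom: "\<sigma> \<in> hom G G" and invol: "\<And>x. x \<in> carrier G \<Longrightarrow> \<sigma> (\<sigma> x) = x"
    and rev: "c_reverses G \<sigma> h g" and g: "g \<in> carrier G" and k: "k \<in> carrier G"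
  shows "c_reverses G \<sigma> (\<sigma> k \<otimes> h \<otimes> inv k) (k \<otimes> g \<otimes> inv k)"
proof -
  interpret \<sigma>: group_hom G G \<sigma>
    using hom by (simp add: group_hom_def group_hom_axioms_def is_group)
  from rev have h: "h \<in> carrier G" and h_invol: "h \<otimes> \<sigma> h = \<one>"
    and h_rev: "h \<otimes> g \<otimes> inv h = inv (\<sigma> g)"
    by (simp_all add: c_reverses_def)
  have cancel: "inv a \<otimes> (a \<otimes> x) = x" "a \<otimes> (inv a \<otimes> x) = x"
    if "a \<in> carrier G" "x \<in> carrier G" for a x
    using that by (simp_all flip: m_assoc)
  have "\<sigma> k \<otimes> h \<otimes> inv k \<otimes> \<sigma> (\<sigma> k \<otimes> h \<otimes> inv k) = \<sigma> k \<otimes> (h \<otimes> \<sigma> h) \<otimes> inv (\<sigma> k)"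
    using h k invol by (simp add: m_assoc cancel)
  moreover have "\<sigma> k \<otimes> h \<otimes> inv k \<otimes> (k \<otimes> g \<otimes> inv k) \<otimes> inv (\<sigma> k \<otimes> h \<otimes> inv k)
      = \<sigma> k \<otimes> (h \<otimes> g \<otimes> inv h) \<otimes> inv (\<sigma> k)"
    using h k g by (simp add: m_assoc inv_mult_group cancel)
  moreover have "inv (\<sigma> (k \<otimes> g \<otimes> inv k)) = \<sigma> k \<otimes> inv (\<sigma> g) \<otimes> inv (\<sigma> k)"
    using k g by (simp add: m_assoc inv_mult_group)
  ultimately show ?thesis
    using h k h_invol h_rev by (simp add: c_reverses_def)
qed

lemma (in group) c_reverses_by_involution:
  assumes "h \<in> carrier G" "g \<in> carrier G" "\<sigma> h = h" "\<sigma> g = g"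
    and "h \<otimes> h = \<one>" "h \<otimes> g \<otimes> (h \<otimes> g) = \<one>"
  shows "c_reverses G \<sigma> h g"
proof -
  have "inv h = h" "inv g = h \<otimes> g \<otimes> h"
    using assms by (simp_all add: inv_equality m_assoc)
  then show ?thesis
    using assms by (simp add: c_reverses_def)
qed

lemma strongly_c_reversibleI:
  assumes g: "g \<in> Aff n" and rev: "c_reverses (aff_group n) aff_cnj h g"
  shows "strongly_c_reversible n g"
proof -
  have h: "h \<in> Aff n" using rev by (simp add: c_reverses_def)
  have "aff_cnj g \<in> Aff n"
    using hom_in_carrier[OF aff_cnj_hom] g by simp
  then have "aff_mult (aff_mult h g) (aff_inv n h) = aff_inv n (aff_cnj g)"
    using rev g h by (simp add: c_reverses_def aff_inv_eq_inv)
  moreover have "coninvolution n h"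
    using rev by (simp add: c_reverses_def coninvolution_def)
  ultimately show ?thesis
    unfolding strongly_c_reversible_def by blast
qed

lemma alternating_sum_choose_choose:
  "(\<Sum>k\<le>m. (-1)^k * of_nat (m choose k) * of_nat (k choose i)) =
     (if m = i then (-1)^m else (0::'a::comm_ring_1))"
proof (cases "i \<le> m")
  case False
  then show ?thesis by (auto intro!: sum.neutral simp: binomial_eq_0)
next
  case True
  have "(\<Sum>k\<le>m. (-1)^k * of_nat (m choose k) * of_nat (k choose i) :: 'a) =
        (\<Sum>k\<in>{i..m}. (-1)^k * of_nat (m choose k) * of_nat (k choose i))"
    by (rule sum.mono_neutral_right) (auto simp: not_le binomial_eq_0)
  also have "\<dots> = (\<Sum>l\<in>{0..m-i}. (-1)^(l+i) * of_nat (m choose (l+i)) * of_nat ((l+i) choose i))"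
    using True sum.shift_bounds_cl_nat_ivl[of
        "\<lambda>k. (-1)^k * of_nat (m choose k) * of_nat (k choose i) :: 'a" 0 i "m-i"]
    by simp
  also have "\<dots> = (\<Sum>l\<in>{0..m-i}. (-1)^i * of_nat (m choose i) * ((-1)^l * of_nat ((m-i) choose l)))"
  proof (rule sum.cong)
    fix l assume "l \<in> {0..m-i}"
    then have "(m choose (l+i)) * ((l+i) choose i) = (m choose i) * ((m-i) choose l)"
      using choose_mult[of i "l+i" m] True by auto
    then have "(of_nat (m choose (l+i)) * of_nat ((l+i) choose i) :: 'a) =
        of_nat (m choose i) * of_nat ((m-i) choose l)"
      by (metis of_nat_mult)
    then show "(-1)^(l+i) * of_nat (m choose (l+i)) * of_nat ((l+i) choose i) =
        (-1)^i * of_nat (m choose i) * ((-1)^l * (of_nat ((m-i) choose l) :: 'a))"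
      by (simp add: power_add algebra_simps)
  qed simp
  also have "\<dots> = (-1)^i * of_nat (m choose i) * (\<Sum>l\<le>m-i. (-1)^l * of_nat ((m-i) choose l))"
    by (simp add: sum_distrib_left atLeast0AtMost)
  also have "\<dots> = (if m = i then (-1)^m else 0)"
    using True choose_alternating_sum[of "m-i", where 'a='a] by auto
  finally show ?thesis .
qed

lemma jordan_block_one_mult_vec_index:
  fixes x :: "'a :: semiring_1 vec"
  assumes "i < n" "x \<in> carrier_vec n"
  shows "(jordan_block n 1 *\<^sub>v x) $ i = x $ i + (if Suc i < n then x $ Suc i else 0)"
proof -
  have "(jordan_block n 1 *\<^sub>v x) $ i = row (jordan_block n 1) i \<bullet> x"
    using assms by simp
  also have "\<dots> = (\<Sum>k\<in>{0..<n}. (if k = i then x $ k else 0) + (if k = Suc i then x $ k else 0))"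
    unfolding scalar_prod_def using assms by (intro sum.cong) auto
  also have "\<dots> = x $ i + (if Suc i < n then x $ Suc i else 0)"
    using assms by (simp add: sum.distrib)
  finally show ?thesis .
qed

lemma jordan_block_one_mult_index:
  fixes A :: "'a :: semiring_1 mat"
  assumes "i < n" "j < n" "A \<in> carrier_mat n n"
  shows "(jordan_block n 1 * A) $$ (i, j) = A $$ (i, j) + (if Suc i < n then A $$ (Suc i, j) else 0)"
  using assms jordan_block_one_mult_vec_index[of i n "col A j"]
  by (simp add: index_mult_mat_vec)

lemma mult_jordan_block_one_index:
  fixes A :: "'a :: semiring_1 mat"
  assumes "i < n" "j < n" "A \<in> carrier_mat n n"
  shows "(A * jordan_block n 1) $$ (i, j) = A $$ (i, j) + (if 0 < j then A $$ (i, j - 1) else 0)"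
proof -
  have "(A * jordan_block n 1) $$ (i, j) = row A i \<bullet> col (jordan_block n 1) j"
    using assms by simp
  also have "\<dots> = (\<Sum>k\<in>{0..<n}.
      (if k = j then A $$ (i, k) else 0) + (if Suc k = j then A $$ (i, k) else 0))"
    unfolding scalar_prod_def using assms by (intro sum.cong) auto
  also have "\<dots> = A $$ (i, j) + (if 0 < j then A $$ (i, j - 1) else 0)"
    using assms by (cases j) (auto simp: sum.distrib)
  finally show ?thesis .
qed

text \<open>Up to the sign \<open>(-1)\<^sup>n\<close>, the matrix of \<open>p(x) \<mapsto> p(-1-x)\<close> on polynomials of degree \<open>< n\<close>
  in the monomial basis.\<close>
definition binom_mat :: "nat \<Rightarrow> complex mat" where
  "binom_mat n = mat n n (\<lambda>(i, j). (-1)^(n + j) * of_nat (j choose i))"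

lemma binom_mat_carrier [simp]: "binom_mat n \<in> carrier_mat n n"
  by (simp add: binom_mat_def)

lemma binom_mat_dim [simp]: "dim_row (binom_mat n) = n" "dim_col (binom_mat n) = n"
  by (simp_all add: binom_mat_def)

lemma binom_mat_index [simp]:
  "i < n \<Longrightarrow> j < n \<Longrightarrow> binom_mat n $$ (i, j) = (-1)^(n + j) * of_nat (j choose i)"
  by (simp add: binom_mat_def)

lemma map_mat_cnj_binom_mat [simp]: "map_mat cnj (binom_mat n) = binom_mat n"
  by (intro eq_matI) (auto simp: binom_mat_def)

lemma binom_mat_squared: "binom_mat n * binom_mat n = 1\<^sub>m n"
proof (intro eq_matI)
  fix i j assume "i < dim_row (1\<^sub>m n)" "j < dim_col (1\<^sub>m n)"
  then have i: "i < n" and j: "j < n" by auto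
  have sign: "(-1)^(n + k) * x * ((-1)^(n + j) * y) = (-1)^j * ((-1)^k * y * x)"
    for k and x y :: complex
    by (simp add: power_add algebra_simps flip: power_mult_distrib)
  have "(binom_mat n * binom_mat n) $$ (i, j) =
      (\<Sum>k\<in>{0..<n}. (-1)^(n + k) * of_nat (k choose i) * ((-1)^(n + j) * of_nat (j choose k)))"
    using i j by (simp add: scalar_prod_def)
  also have "\<dots> = (\<Sum>k\<le>j. (-1)^(n + k) * of_nat (k choose i) * ((-1)^(n + j) * of_nat (j choose k)))"
    using j by (intro sum.mono_neutral_right) (auto simp: binomial_eq_0)
  also have "\<dots> = (-1)^j * (\<Sum>k\<le>j. (-1)^k * of_nat (j choose k) * of_nat (k choose i))"
    by (simp only: sign sum_distrib_left)
  also have "\<dots> = (if j = i then 1 else 0)"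
    by (simp add: alternating_sum_choose_choose flip: power_add)
  finally show "(binom_mat n * binom_mat n) $$ (i, j) = 1\<^sub>m n $$ (i, j)"
    using i j by auto
qed auto

lemma jordan_binom_jordan: "jordan_block n 1 * binom_mat n * jordan_block n 1 = binom_mat n"
proof (intro eq_matI)
  fix i j assume "i < dim_row (binom_mat n)" "j < dim_col (binom_mat n)"
  then have i: "i < n" and j: "j < n" by auto
  let ?J = "jordan_block n (1::complex)" and ?P = "binom_mat n"
  have left: "(?J * ?P) $$ (i, k) = ?P $$ (i, k) + (if Suc i < n then ?P $$ (Suc i, k) else 0)"
    if "k < n" for k
    using i that by (intro jordan_block_one_mult_index) auto
  have "(?J * ?P * ?J) $$ (i, j) =
      (?J * ?P) $$ (i, j) + (if 0 < j then (?J * ?P) $$ (i, j - 1) else 0)"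
    using i j by (intro mult_jordan_block_one_index) auto
  also have "\<dots> = ?P $$ (i, j)"
  proof (cases j)
    case (Suc l)
    have "(l choose i) = 0" if "n \<le> Suc i"
      using j Suc that by (simp add: binomial_eq_0)
    then show ?thesis
      using i j Suc by (auto simp del: index_mult_mat simp add: left algebra_simps binomial_eq_0)
  qed (use i left in \<open>auto simp del: index_mult_mat simp add: binomial_eq_0\<close>)
  finally show "(?J * ?P * ?J) $$ (i, j) = ?P $$ (i, j)" .
qed auto

text \<open>Entries \<open>1, \<dots>, n - 1\<close> are forced by \<open>jordan_mult_binom_vec\<close>, entry \<open>0\<close> by
  \<open>binom_mat_mult_binom_vec\<close>.\<close>
definition binom_vec :: "nat \<Rightarrow> complex vec" where
  "binom_vec n = vec n (\<lambda>i. of_nat (n choose i) - (if i = 0 \<and> odd n then 1 else 0))"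

lemma binom_vec_carrier [simp]: "binom_vec n \<in> carrier_vec n"
  by (simp add: binom_vec_def)

lemma binom_vec_dim [simp]: "dim_vec (binom_vec n) = n"
  by (simp add: binom_vec_def)

lemma binom_vec_index [simp]:
  "i < n \<Longrightarrow> binom_vec n $ i = of_nat (n choose i) - (if i = 0 \<and> odd n then 1 else 0)"
  by (simp add: binom_vec_def)

lemma map_vec_cnj_binom_vec [simp]: "map_vec cnj (binom_vec n) = binom_vec n"
  by (intro eq_vecI) (auto simp: binom_vec_def)

lemma binom_mat_mult_binom_vec: "binom_mat n *\<^sub>v binom_vec n = - binom_vec n"
proof (intro eq_vecI)
  fix i assume "i < dim_vec (- binom_vec n)"
  then have i: "i < n" by simp
  let ?A = "\<lambda>k. (-1)^k * of_nat (n choose k) * of_nat (k choose i) :: complex"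
  let ?c = "if i = 0 \<and> odd n then 1 else 0 :: complex"
  have "(binom_mat n *\<^sub>v binom_vec n) $ i =
      (\<Sum>k<n. (-1)^n * ?A k - (-1)^n * (if k = 0 then ?c else 0))"
    using i by (auto simp: scalar_prod_def atLeast0LessThan power_add algebra_simps binomial_eq_0
        intro!: sum.cong)
  also have "\<dots> = (-1)^n * (\<Sum>k<n. ?A k) - (-1)^n * ?c"
    using i by (simp add: sum_subtractf sum_distrib_left sum_negf)
  also have "(\<Sum>k<n. ?A k) = - ((-1)^n * of_nat (n choose i))"
    using alternating_sum_choose_choose[of n i] i
    by (intro eq_neg_iff_add_eq_0[THEN iffD2]) (simp flip: lessThan_Suc_atMost)
  finally show "(binom_mat n *\<^sub>v binom_vec n) $ i = (- binom_vec n) $ i"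
    using i by (auto simp flip: power_add)
qed simp

lemma jordan_mult_binom_vec:
  "jordan_block n 1 *\<^sub>v binom_vec n =
     binom_vec n - unit_vec n (n - 1) - jordan_block n 1 *\<^sub>v (binom_mat n *\<^sub>v unit_vec n (n - 1))"
proof (intro eq_vecI)
  fix i assume "i < dim_vec (binom_vec n - unit_vec n (n - 1) -
      jordan_block n 1 *\<^sub>v (binom_mat n *\<^sub>v unit_vec n (n - 1)))"
  then have i: "i < n" by simp
  then obtain m where n: "n = Suc m" by (cases n) auto
  let ?p = "binom_mat n *\<^sub>v unit_vec n (n - 1)"
  have pc: "?p \<in> carrier_vec n"
    by (rule mult_mat_vec_carrier[OF binom_mat_carrier unit_vec_carrier])
  have p: "?p $ k = - of_nat (m choose k)" if "k < n" for k
    using that n by simp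
  have "(jordan_block n 1 *\<^sub>v ?p) $ i = ?p $ i + (if Suc i < n then ?p $ Suc i else 0)"
    using i pc by (rule jordan_block_one_mult_vec_index)
  moreover have "(jordan_block n 1 *\<^sub>v binom_vec n) $ i =
      binom_vec n $ i + (if Suc i < n then binom_vec n $ Suc i else 0)"
    using i by (intro jordan_block_one_mult_vec_index) auto
  ultimately show "(jordan_block n 1 *\<^sub>v binom_vec n) $ i =
      (binom_vec n - unit_vec n (n - 1) - jordan_block n 1 *\<^sub>v ?p) $ i"
    using i n p[of i] p[of "Suc i"] by (cases "i = m") auto
qed simp

lemma invertible_jordan_block_one: "invertible_mat (jordan_block n (1::complex))"
proof -
  let ?J = "jordan_block n (1::complex)" and ?P = "binom_mat n"
  have "?J * (?P * ?J * ?P) = ?J * ?P * ?J * ?P"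
    by (simp add: assoc_mult_mat[of _ n n _ n _ n] mult_carrier_mat[of _ n n _ n])
  also have "\<dots> = 1\<^sub>m n"
    by (simp add: jordan_binom_jordan binom_mat_squared)
  finally have right: "?J * (?P * ?J * ?P) = 1\<^sub>m n" .
  have "?P * ?J * ?P * ?J = ?P * (?J * ?P * ?J)"
    by (simp add: assoc_mult_mat[of _ n n _ n _ n] mult_carrier_mat[of _ n n _ n])
  also have "\<dots> = 1\<^sub>m n"
    by (simp add: jordan_binom_jordan binom_mat_squared)
  finally show ?thesis
    using right by (intro invertible_matI[of _ n "?P * ?J * ?P"]) auto
qed

lemma binom_jordan_mult_vec:
  "(binom_mat n * jordan_block n 1) *\<^sub>v (binom_mat n *\<^sub>v unit_vec n (n - 1) + binom_vec n) =
     - (binom_mat n *\<^sub>v unit_vec n (n - 1) + binom_vec n)" (is "_ *\<^sub>v ?x = - ?x")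
proof -
  let ?J = "jordan_block n (1::complex)" and ?P = "binom_mat n" and ?e = "unit_vec n (n - 1)"
    and ?u = "binom_vec n"
  have carrier: "?P *\<^sub>v ?e \<in> carrier_vec n" "?J *\<^sub>v (?P *\<^sub>v ?e) \<in> carrier_vec n"
    "?P *\<^sub>v (?J *\<^sub>v (?P *\<^sub>v ?e)) \<in> carrier_vec n"
    by (simp_all add: mult_mat_vec_carrier[of _ n n])
  have "(?P * ?J) *\<^sub>v ?x = ?P *\<^sub>v (?J *\<^sub>v (?P *\<^sub>v ?e)) + ?P *\<^sub>v (?J *\<^sub>v ?u)"
    by (simp add: assoc_mult_mat_vec[of _ n n _ n] mult_add_distrib_mat_vec[of _ n n]
        mult_mat_vec_carrier[of _ n n])
  also have "?P *\<^sub>v (?J *\<^sub>v ?u) = - ?u - ?P *\<^sub>v ?e - ?P *\<^sub>v (?J *\<^sub>v (?P *\<^sub>v ?e))"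
    unfolding jordan_mult_binom_vec
    by (simp add: mult_minus_distrib_mat_vec[of _ n n] binom_mat_mult_binom_vec
        mult_mat_vec_carrier[of _ n n])
  finally show ?thesis
    using carrier by (intro eq_vecI) auto
qed

lemma c_reverses_jordan_normal_form:
  fixes r :: real
  shows "c_reverses (aff_group n) aff_cnj (binom_mat n, of_real r \<cdot>\<^sub>v binom_vec n)
     (jordan_block n 1, of_real r \<cdot>\<^sub>v unit_vec n (n - 1))"
proof -
  interpret group "aff_group n" by (rule group_aff_group)
  let ?J = "jordan_block n (1::complex)" and ?P = "binom_mat n" and ?e = "unit_vec n (n - 1)"
    and ?u = "binom_vec n" and ?r = "complex_of_real r"
  define x where "x = ?P *\<^sub>v ?e + ?u"
  have x: "x \<in> carrier_vec n" by (simp add: x_def mult_mat_vec_carrier[of _ n n])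
  have PJx: "(?P * ?J) *\<^sub>v x = - x"
    unfolding x_def by (rule binom_jordan_mult_vec)
  have "?P * ?J * (?P * ?J) = ?P * (?J * ?P * ?J)"
    by (simp add: assoc_mult_mat[of _ n n _ n _ n] mult_carrier_mat[of _ n n _ n])
  then have PJPJ: "?P * ?J * (?P * ?J) = 1\<^sub>m n"
    by (simp add: jordan_binom_jordan binom_mat_squared)
  have h: "(?P, ?r \<cdot>\<^sub>v ?u) \<in> Aff n"
    by (simp add: invertible_matI[of _ n ?P] binom_mat_squared)
  have g: "(?J, ?r \<cdot>\<^sub>v ?e) \<in> Aff n"
    by (simp add: invertible_jordan_block_one)
  have "aff_mult (?P, ?r \<cdot>\<^sub>v ?u) (?P, ?r \<cdot>\<^sub>v ?u) = aff_one n"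
    by (auto simp: aff_one_def binom_mat_squared mult_mat_vec[of _ n n] binom_mat_mult_binom_vec
        intro!: eq_vecI)
  moreover have "aff_mult (?P, ?r \<cdot>\<^sub>v ?u) (?J, ?r \<cdot>\<^sub>v ?e) = (?P * ?J, ?r \<cdot>\<^sub>v x)"
    by (auto simp: x_def mult_mat_vec[of _ n n] algebra_simps intro!: eq_vecI)
  moreover have "aff_mult (?P * ?J, ?r \<cdot>\<^sub>v x) (?P * ?J, ?r \<cdot>\<^sub>v x) = aff_one n"
    using x
    by (auto simp: aff_one_def PJPJ PJx mult_mat_vec[of _ n n] mult_carrier_mat[of _ n n _ n]
        intro!: eq_vecI)
  moreover have "aff_cnj (?P, ?r \<cdot>\<^sub>v ?u) = (?P, ?r \<cdot>\<^sub>v ?u)"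
    "aff_cnj (?J, ?r \<cdot>\<^sub>v ?e) = (?J, ?r \<cdot>\<^sub>v ?e)"
    by (auto simp: cnj.vec_hom_smult intro!: eq_matI eq_vecI)
  ultimately show ?thesis
    using h g by (intro c_reverses_by_involution) simp_all
qed

lemma smult_mat_mult_vec:
  fixes A :: "'a :: comm_semiring_1 mat"
  assumes "A \<in> carrier_mat nr n" "x \<in> carrier_vec n"
  shows "(a \<cdot>\<^sub>m A) *\<^sub>v x = a \<cdot>\<^sub>v (A *\<^sub>v x)"
  using assms by (intro eq_vecI) (auto simp: scalar_prod_def sum_distrib_left algebra_simps)

lemma jordan_affine_conj_normal_form:
  assumes v: "v \<in> carrier_vec n"
  obtains k and r :: real where "k \<in> Aff n"
    "aff_mult (jordan_block n 1, v) k =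
       aff_mult k (jordan_block n 1, of_real r \<cdot>\<^sub>v unit_vec n (n - 1))"
proof -
  \<comment> \<open>\<open>k = (\<mu> I, t)\<close> with \<open>(J - I) t = c e - v\<close>, solvable as \<open>J - I\<close> is the shift; \<open>\<mu>\<close> rescales \<open>c\<close> to \<open>0\<close> or \<open>1\<close>\<close>
  let ?J = "jordan_block n (1::complex)" and ?e = "unit_vec n (n - 1) :: complex vec"
  define c where "c = v $ (n - 1)"
  define \<mu> where "\<mu> = (if c = 0 then 1 else c)"
  define r :: real where "r = (if c = 0 then 0 else 1)"
  define t where "t = vec n (\<lambda>i. if i = 0 then 0 else - v $ (i - 1))"
  have \<mu>: "\<mu> \<noteq> 0" and \<mu>r: "\<mu> * of_real r = c"
    by (simp_all add: \<mu>_def r_def)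
  have "(\<mu> \<cdot>\<^sub>m 1\<^sub>m n) * (inverse \<mu> \<cdot>\<^sub>m 1\<^sub>m n) = 1\<^sub>m n"
    "(inverse \<mu> \<cdot>\<^sub>m 1\<^sub>m n) * (\<mu> \<cdot>\<^sub>m 1\<^sub>m n) = 1\<^sub>m n"
    using \<mu> by (auto simp: mult_smult_assoc_mat[of _ n n _ n] mult_smult_distrib[of _ n n _ n]
        intro!: eq_matI)
  then have k: "(\<mu> \<cdot>\<^sub>m 1\<^sub>m n, t) \<in> Aff n"
    by (auto simp: t_def intro: invertible_matI[of _ n "inverse \<mu> \<cdot>\<^sub>m 1\<^sub>m n"])
  have "?J *\<^sub>v t + v = \<mu> \<cdot>\<^sub>v (of_real r \<cdot>\<^sub>v ?e) + t"
  proof (intro eq_vecI)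
    fix i assume "i < dim_vec (\<mu> \<cdot>\<^sub>v (of_real r \<cdot>\<^sub>v ?e) + t)"
    then have i: "i < n" by (simp add: t_def)
    have "(?J *\<^sub>v t) $ i = t $ i + (if Suc i < n then t $ Suc i else 0)"
      using i by (intro jordan_block_one_mult_vec_index) (auto simp: t_def)
    then show "(?J *\<^sub>v t + v) $ i = (\<mu> \<cdot>\<^sub>v (of_real r \<cdot>\<^sub>v ?e) + t) $ i"
      using i v \<mu>r by (auto simp: t_def c_def mult.assoc[symmetric])
  qed (use v in \<open>simp add: t_def\<close>)
  moreover have "?J * (\<mu> \<cdot>\<^sub>m 1\<^sub>m n) = (\<mu> \<cdot>\<^sub>m 1\<^sub>m n) * ?J"
    by (simp add: mult_smult_assoc_mat[of _ n n _ n] mult_smult_distrib[of _ n n _ n])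
  ultimately show ?thesis
    using that[OF k] v by (simp add: smult_mat_mult_vec[of _ n n])
qed

theorem lemma3p5:
  fixes n :: nat and v :: "complex vec"
  assumes "v \<in> carrier_vec n"
  shows "strongly_c_reversible n (jordan_block n 1, v)"
proof -
  interpret group "aff_group n" by (rule group_aff_group)
  let ?J = "jordan_block n (1::complex)"
  obtain k and r :: real where k: "k \<in> Aff n" and
    conj: "aff_mult (?J, v) k = aff_mult k (?J, of_real r \<cdot>\<^sub>v unit_vec n (n - 1))"
    using jordan_affine_conj_normal_form[OF assms] .
  let ?g\<^sub>0 = "(?J, of_real r \<cdot>\<^sub>v unit_vec n (n - 1))"
    and ?h\<^sub>0 = "(binom_mat n, of_real r \<cdot>\<^sub>v binom_vec n)"
  have g: "(?J, v) \<in> Aff n" and g\<^sub>0: "?g\<^sub>0 \<in> Aff n"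
    using assms by (simp_all add: invertible_jordan_block_one)
  have "(?J, v) = k \<otimes>\<^bsub>aff_group n\<^esub> ?g\<^sub>0 \<otimes>\<^bsub>aff_group n\<^esub> inv\<^bsub>aff_group n\<^esub> k"
    by (rule inv_solve_right[THEN iffD2]) (use conj k g g\<^sub>0 in \<open>simp_all add: aff_mult_closed\<close>)
  then have "c_reverses (aff_group n) aff_cnj
      (aff_cnj k \<otimes>\<^bsub>aff_group n\<^esub> ?h\<^sub>0 \<otimes>\<^bsub>aff_group n\<^esub> inv\<^bsub>aff_group n\<^esub> k) (?J, v)"
    using c_reverses_conj[OF aff_cnj_hom _ c_reverses_jordan_normal_form] k g\<^sub>0 by simp
  then show ?thesis
    using g by (intro strongly_c_reversibleI)
qed

end
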